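(* Let $r\geq 1$, $n\geq r+1$ and $k\geq 0$ be integers. Then $$r\,Q_{n-r,k}(r,t)=\sum_{F\in\mathcal F_{n,k}^r}t^{\mathrm{eld}(F)}.$$
   Context: Define polynomials $Q_m(x,y,z,t)$ by $Q_1=1$ and $Q_{m+1}=[x+mz+(y+t)(m+y\partial_y)]Q_m$ for $m\ge1$, and define $Q_{m,k}(x,t)$ by $Q_m(x,y,1,t)=\sum_{k\ge 0}Q_{m,k}(x,t)y^k$ (so $Q_{m,k}=0$ for $k\geq m$). All trees are rooted trees whose vertices are labeled by distinct positive integers. A vertex $j$ is a descendant of $i$ if the path from the root to $j$ passes through $i$ (every vertex is a descendant of itself); $\beta_T(i)$ is the smallest descendant of $i$. A child of $i$ is a descendant joined to $i$ by an edge $(i,j)$; children of the same vertex are brothers. A plane tree is a rooted tree in which the children of each vertex are linearly ordered (left to right). In a plane tree $T$, a vertex $j$ is elder if it has a brother $k$ to its right with $\beta_T(k)<\beta_T(j)$. An edge $(i,j)$ is proper if $j$ is an elder child of $i$ or $i<\beta_T(j)$; otherwise it is improper. $\mathcal F_{n,k}^r$ is the set of forests consisting of $r$ plane trees whose vertex sets partition $[n]=\{1,\dots,n\}$, whose roots are $1,\dots,r$, and which have exactly $k$ improper edges in total; $\mathrm{eld}(F)$ is the total number of elder vertices in $F$. *)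

theory Defs
  imports Main "HOL-Computational_Algebra.Polynomial"
begin

text \<open>Q_m(x,y,z,t) is represented, for fixed real x, z, t, as a univariate
polynomial in y.  The operator x + m z + (y+t)(m + y d/dy) is applied literally.\<close>

fun Qp :: "nat \<Rightarrow> real \<Rightarrow> real \<Rightarrow> real \<Rightarrow> real poly" where
  "Qp 0 x z t = 0"
| "Qp (Suc 0) x z t = 1"
| "Qp (Suc (Suc m)) x z t =
     (let p = Qp (Suc m) x z t; mm = real (Suc m) in
        smult (x + mm * z) p + [:t, 1:] * (smult mm p + [:0, 1:] * pderiv p))"

definition Qmk :: "nat \<Rightarrow> nat \<Rightarrow> real \<Rightarrow> real \<Rightarrow> real" where
  "Qmk m k x t = coeff (Qp m x 1 t) k"

datatype ptree = Node nat "ptree list"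

fun root :: "ptree \<Rightarrow> nat" where
  "root (Node v cs) = v"

fun labels :: "ptree \<Rightarrow> nat list" where
  "labels (Node v cs) = v # concat (map labels cs)"

definition beta :: "ptree \<Rightarrow> nat" where
  "beta t = Min (set (labels t))"

definition elder_at :: "ptree list \<Rightarrow> nat \<Rightarrow> bool" where
  "elder_at cs i \<longleftrightarrow> (\<exists>j. i < j \<and> j < length cs \<and> beta (cs ! j) < beta (cs ! i))"

definition improper_at :: "nat \<Rightarrow> ptree list \<Rightarrow> nat \<Rightarrow> bool" where
  "improper_at v cs i \<longleftrightarrow> \<not> (elder_at cs i \<or> v < beta (cs ! i))"

fun eld_tree :: "ptree \<Rightarrow> nat" where
  "eld_tree (Node v cs) =
     card {i. i < length cs \<and> elder_at cs i} + sum_list (map eld_tree cs)"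

fun imp_tree :: "ptree \<Rightarrow> nat" where
  "imp_tree (Node v cs) =
     card {i. i < length cs \<and> improper_at v cs i} + sum_list (map imp_tree cs)"

text \<open>A forest of r plane trees with roots 1..r is represented as the list of its
trees, the i-th entry (0-based) being the tree rooted at i+1.\<close>
definition eld :: "ptree list \<Rightarrow> nat" where
  "eld F = sum_list (map eld_tree F)"

definition improper_count :: "ptree list \<Rightarrow> nat" where
  "improper_count F = sum_list (map imp_tree F)"

definition forests :: "nat \<Rightarrow> nat \<Rightarrow> nat \<Rightarrow> ptree list set" where
  "forests n k r = {F. length F = r \<and> (\<forall>i<r. root (F ! i) = i + 1)
      \<and> distinct (concat (map labels F)) \<and> set (concat (map labels F)) = {1..n}
      \<and> improper_count F = k}"

end

theory Submission
  imports Defs "HOL-Library.Multiset"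
begin

text \<open>
  Hanging the roots 1, ..., r below a virtual root 0 turns a forest into a single plane tree.
  Every forest in F^r_{n+1,k} arises in exactly one way from a forest on [n] by inserting the
  largest label N = n + 1 at a vertex s: as a leaf child of s, at one of deg s + 1 positions
  (N is elder unless it is the last child); as the new parent of s, if s is not a root (one new
  improper edge); or, for an improper edge from s to a child w, by letting N take the place of s,
  with s keeping only its children right of w and becoming with w the last two children of N
  (w first: one new improper edge; s first: s becomes elder). The insertion is recovered from
  the position and the children of N. A forest in F^r_{n,k} has n vertices, n - r edges, n - r
  non-root vertices and k improper edges, so summing t^eld over all insertions gives
    S_{n+1,k} = (n + t (n - r) + t k) S_{n,k} + (n - r + k - 1) S_{n,k-1}
  for the sums S_{n,k} of the theorem. With m = n - r this is the recurrence of r Q_{m,k}(r,t);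
  it also yields S_{r+1,k} = r [k = 0] = r Q_{1,k}(r,t), since the only forest on [r] consists
  of r isolated roots.
\<close>
section \<open>Elder vertices and improper edges\<close>

fun count_elder :: "nat list \<Rightarrow> nat" where
  "count_elder [] = 0"
| "count_elder (b # bs) = (if \<exists>c\<in>set bs. c < b then 1 else 0) + count_elder bs"

fun count_improper :: "nat \<Rightarrow> nat list \<Rightarrow> nat" where
  "count_improper v [] = 0"
| "count_improper v (b # bs) =
     (if (\<exists>c\<in>set bs. c < b) \<or> v < b then 0 else 1) + count_improper v bs"

lemma card_less_Suc_split:
  "card {i. i < Suc m \<and> P i} = (if P 0 then 1 else 0) + card {i. i < m \<and> P (Suc i)}"
proof -
  have "{i. i < Suc m \<and> P i} = (if P 0 then {0} else {}) \<union> Suc ` {i. i < m \<and> P (Suc i)}"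
    by (auto simp: image_iff less_Suc_eq_0_disj)
  then show ?thesis
    by (auto simp: card_insert_if card_image)
qed

lemma elder_at_Cons_Suc: "elder_at (c # cs) (Suc i) \<longleftrightarrow> elder_at cs i"
  unfolding elder_at_def by (auto simp: less_Suc_eq_0_disj)

lemma elder_at_Cons_0: "elder_at (c # cs) 0 \<longleftrightarrow> (\<exists>b\<in>set (map beta cs). b < beta c)"
proof
  assume "elder_at (c # cs) 0"
  then obtain j where "0 < j" "j < length (c # cs)" "beta ((c # cs) ! j) < beta c"
    by (auto simp: elder_at_def)
  then show "\<exists>b\<in>set (map beta cs). b < beta c"
    by (cases j) auto
next
  assume "\<exists>b\<in>set (map beta cs). b < beta c"
  then obtain j where "j < length cs" "beta (cs ! j) < beta c"
    by (auto simp: in_set_conv_nth)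
  then show "elder_at (c # cs) 0"
    unfolding elder_at_def by (intro exI[of _ "Suc j"]) simp
qed

lemma improper_at_Cons_Suc: "improper_at v (c # cs) (Suc i) \<longleftrightarrow> improper_at v cs i"
  unfolding improper_at_def by (simp add: elder_at_Cons_Suc)

lemma improper_at_Cons_0:
  "improper_at v (c # cs) 0 \<longleftrightarrow> \<not> ((\<exists>b\<in>set (map beta cs). b < beta c) \<or> v < beta c)"
  unfolding improper_at_def by (simp add: elder_at_Cons_0)

lemma card_elder_at: "card {i. i < length cs \<and> elder_at cs i} = count_elder (map beta cs)"
  by (induction cs)
    (simp_all only: length_Cons card_less_Suc_split elder_at_Cons_Suc elder_at_Cons_0, simp_all)

lemma card_improper_at:
  "card {i. i < length cs \<and> improper_at v cs i} = count_improper v (map beta cs)"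
  by (induction cs)
    (simp_all only: length_Cons card_less_Suc_split improper_at_Cons_Suc improper_at_Cons_0, simp_all)

lemma eld_tree_Node [simp]:
  "eld_tree (Node v cs) = count_elder (map beta cs) + sum_list (map eld_tree cs)"
  by (simp add: card_elder_at)

lemma imp_tree_Node [simp]:
  "imp_tree (Node v cs) = count_improper v (map beta cs) + sum_list (map imp_tree cs)"
  by (simp add: card_improper_at)

declare eld_tree.simps [simp del] imp_tree.simps [simp del]

lemma count_elder_append_cong:
  assumes "\<forall>b\<in>set xs. (\<exists>c\<in>set ys. c < b) \<longleftrightarrow> (\<exists>c\<in>set ys'. c < b)"
  shows "count_elder (xs @ ys) + count_elder ys' = count_elder (xs @ ys') + count_elder ys"
  using assms by (induction xs) auto

lemma count_improper_append_cong:
  assumes "\<forall>b\<in>set xs. (\<exists>c\<in>set ys. c < b) \<longleftrightarrow> (\<exists>c\<in>set ys'. c < b)"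
    and "\<forall>b\<in>set xs. \<not> (\<exists>c\<in>set ys. c < b) \<longrightarrow> (v < b \<longleftrightarrow> v' < b)"
  shows "count_improper v (xs @ ys) + count_improper v' ys' =
    count_improper v' (xs @ ys') + count_improper v ys"
  using assms by (induction xs) auto

lemma labels_neq_Nil [simp]: "labels t \<noteq> []"
  by (cases t) auto

lemma root_in_labels: "root t \<in> set (labels t)"
  by (cases t) simp

lemma beta_in_labels: "beta t \<in> set (labels t)"
  unfolding beta_def by (rule Min_in) simp_all

lemma beta_le: "x \<in> set (labels t) \<Longrightarrow> beta t \<le> x"
  unfolding beta_def by simp

lemma beta_less: "\<forall>x\<in>set (labels t). x < N \<Longrightarrow> beta t < N"
  using beta_in_labels by blast

lemma beta_Node: "beta (Node v cs) = Min (insert v (beta ` set cs))"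
proof (rule antisym)
  have "beta (Node v cs) \<le> beta c" if "c \<in> set cs" for c
    using that beta_in_labels[of c] by (intro beta_le) auto
  then show "beta (Node v cs) \<le> Min (insert v (beta ` set cs))"
    by (auto intro: beta_le)
next
  have "beta (Node v cs) = v \<or> (\<exists>c\<in>set cs. beta (Node v cs) \<in> set (labels c))"
    using beta_in_labels[of "Node v cs"] by auto
  moreover have "Min (insert v (beta ` set cs)) \<le> beta c" if "c \<in> set cs" for c
    using that by simp
  ultimately show "Min (insert v (beta ` set cs)) \<le> beta (Node v cs)"
    by (metis Min_le beta_le finite_imageI finite_insert finite_set insertI1 order.trans)
qed

lemma beta_leaf [simp]: "beta (Node N []) = N"
  by (simp add: beta_Node)

lemma Min_Un_eq_Min:
  assumes "finite A" "finite E" "a \<in> A" "\<forall>x\<in>E. a < x"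
  shows "Min (A \<union> E) = Min A"
proof (cases "E = {}")
  case False
  have "Min A \<le> Min E"
    using assms False by (meson Min_in Min_le less_imp_le order.trans)
  then show ?thesis
    using Min_Un[of A E] assms False by (auto simp: min_def)
qed simp

section \<open>Contexts and occurrences of subtrees\<close>

text \<open>A frame \<open>Fr v L R\<close> is a node labelled v whose children are L, a hole, and R;
  a list of frames, outermost first, is a context with one hole.\<close>

datatype frame = Fr nat "ptree list" "ptree list"

fun plug :: "frame list \<Rightarrow> ptree \<Rightarrow> ptree" where
  "plug [] s = s"
| "plug (Fr v L R # fs) s = Node v (L @ plug fs s # R)"

lemma plug_append: "plug (fs @ gs) s = plug fs (plug gs s)"
  by (induction fs s rule: plug.induct) auto

lemma beta_plug: "beta s = beta s' \<Longrightarrow> beta (plug fs s) = beta (plug fs s')"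
  by (induction fs s rule: plug.induct) (auto simp: beta_Node)

lemma eld_tree_plug:
  assumes "beta s = beta s'"
  shows "eld_tree (plug fs s) + eld_tree s' = eld_tree (plug fs s') + eld_tree s"
proof (induction fs)
  case (Cons f fs)
  obtain v L R where f: "f = Fr v L R" by (cases f)
  show ?case
    using Cons.IH beta_plug[OF assms, of fs] unfolding f by simp
qed simp

lemma imp_tree_plug:
  assumes "beta s = beta s'"
  shows "imp_tree (plug fs s) + imp_tree s' = imp_tree (plug fs s') + imp_tree s"
proof (induction fs)
  case (Cons f fs)
  obtain v L R where f: "f = Fr v L R" by (cases f)
  show ?case
    using Cons.IH beta_plug[OF assms, of fs] unfolding f by simp
qed simp

lemma mset_labels_plug:
  "mset (labels (plug fs s)) + mset (labels s') = mset (labels (plug fs s')) + mset (labels s)"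
proof (induction fs)
  case (Cons f fs)
  obtain v L R where f: "f = Fr v L R" by (cases f)
  show ?case
    using Cons.IH unfolding f by (simp add: algebra_simps)
qed simp

lemma labels_plug_subset: "set (labels s) \<subseteq> set (labels (plug fs s))"
  by (induction fs s rule: plug.induct) auto

lemma distinct_labels_plugD: "distinct (labels (plug fs s)) \<Longrightarrow> distinct (labels s)"
  by (induction fs s rule: plug.induct) auto

lemma plug_exists: "a \<in> set (labels t) \<Longrightarrow> \<exists>fs cs. t = plug fs (Node a cs)"
proof (induction t)
  case (Node v cs)
  show ?case
  proof (cases "a = v")
    case True
    then show ?thesis by (metis plug.simps(1))
  next
    case False
    then obtain c where c: "c \<in> set cs" "a \<in> set (labels c)"
      using Node.prems by auto
    from Node.IH[OF c] obtain fs ds where "c = plug fs (Node a ds)" by blast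
    moreover obtain L R where "cs = L @ c # R"
      using split_list[OF c(1)] by blast
    ultimately show ?thesis
      by (metis plug.simps(2))
  qed
qed

lemma shared_label_not_left_of:
  assumes "distinct (concat (map labels (L' @ X' # R')))"
    and "L @ X # R = L' @ X' # R'" and "length L < length L'"
    and "a \<in> set (labels X)" "a \<in> set (labels X')"
  shows False
proof -
  have "X = L' ! length L"
    using assms(2,3) by (metis nth_append nth_append_length)
  then have "a \<in> set (concat (map labels L'))"
    using assms(3,4) by auto
  then show False
    using assms(1,5) by auto
qed

lemma split_at_shared_label:
  assumes d: "distinct (concat (map labels (L @ X # R)))"
    and e: "L @ X # R = L' @ X' # R'"
    and a: "a \<in> set (labels X)" "a \<in> set (labels X')"
  shows "L = L' \<and> X = X' \<and> R = R'"
proof -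
  have "length L = length L'"
    using shared_label_not_left_of[OF _ e _ a] shared_label_not_left_of[OF d e[symmetric] _ a(2,1)]
      d e by (metis linorder_neqE_nat)
  then show ?thesis
    using e by simp
qed

lemma plug_Node_unique:
  "distinct (labels (plug fs (Node a cs))) \<Longrightarrow> plug fs (Node a cs) = plug fs' (Node a cs')
   \<Longrightarrow> fs = fs' \<and> cs = cs'"
proof (induction fs arbitrary: fs')
  case Nil
  show ?case
  proof (cases fs')
    case (Cons f gs)
    obtain v L R where "f = Fr v L R" by (cases f)
    then have "cs = L @ plug gs (Node a cs') # R"
      using Nil.prems Cons by auto
    moreover have "a \<in> set (labels (plug gs (Node a cs')))"
      using labels_plug_subset[of "Node a cs'" gs] by auto
    ultimately show ?thesis
      using Nil.prems(1) by auto
  qed (use Nil.prems in simp)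
next
  case (Cons f fs1)
  obtain v L R where f: "f = Fr v L R" by (cases f)
  have d: "distinct (labels (Node v (L @ plug fs1 (Node a cs) # R)))"
    using Cons.prems(1) f by simp
  have a1: "a \<in> set (labels (plug fs1 (Node a cs)))"
    using labels_plug_subset[of "Node a cs" fs1] by auto
  show ?case
  proof (cases fs')
    case Nil
    then show ?thesis
      using Cons.prems(2) f d a1 by auto
  next
    case (Cons f' gs)
    obtain v' L' R' where f': "f' = Fr v' L' R'" by (cases f')
    have e: "v = v'" "L @ plug fs1 (Node a cs) # R = L' @ plug gs (Node a cs') # R'"
      using Cons.prems(2) f f' Cons by auto
    have a2: "a \<in> set (labels (plug gs (Node a cs')))"
      using labels_plug_subset[of "Node a cs'" gs] by auto
    have "L = L' \<and> plug fs1 (Node a cs) = plug gs (Node a cs') \<and> R = R'"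
      using split_at_shared_label[OF _ e(2) a1 a2] d by simp
    then show ?thesis
      using Cons.IH[of gs] d e f f' Cons by simp
  qed
qed

definition occurrences :: "ptree \<Rightarrow> (frame list \<times> ptree) set" where
  "occurrences t = {(fs, s). plug fs s = t}"

definition occ_in_child :: "nat \<Rightarrow> ptree list \<Rightarrow> nat \<Rightarrow> frame list \<times> ptree \<Rightarrow> frame list \<times> ptree"
  where "occ_in_child v cs i x = (Fr v (take i cs) (drop (Suc i) cs) # fst x, snd x)"

lemma occurrences_Node:
  "occurrences (Node v cs) =
    insert ([], Node v cs) (\<Union>i<length cs. occ_in_child v cs i ` occurrences (cs ! i))"
proof (intro equalityI subsetI)
  fix x assume "x \<in> occurrences (Node v cs)"
  then obtain fs s where x: "x = (fs, s)" "plug fs s = Node v cs"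
    by (auto simp: occurrences_def)
  show "x \<in> insert ([], Node v cs) (\<Union>i<length cs. occ_in_child v cs i ` occurrences (cs ! i))"
  proof (cases fs)
    case (Cons f gs)
    obtain v' L R where f: "f = Fr v' L R" by (cases f)
    then have "cs = L @ plug gs s # R" "v' = v"
      using x Cons by auto
    then have "x = occ_in_child v cs (length L) (gs, s)" "(gs, s) \<in> occurrences (cs ! length L)"
      "length L < length cs"
      using x Cons f by (auto simp: occ_in_child_def occurrences_def)
    then show ?thesis by blast
  qed (use x in simp)
next
  fix x assume "x \<in> insert ([], Node v cs) (\<Union>i<length cs. occ_in_child v cs i ` occurrences (cs ! i))"
  then show "x \<in> occurrences (Node v cs)"
    by (auto simp: occurrences_def occ_in_child_def id_take_nth_drop[symmetric])
qed

lemma finite_occurrences: "finite (occurrences t)"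
  by (induction t) (simp add: occurrences_Node)

lemma sum_occurrences_Node:
  "sum h (occurrences (Node v cs)) =
    h ([], Node v cs) + (\<Sum>i<length cs. \<Sum>x\<in>occurrences (cs ! i). h (occ_in_child v cs i x))"
proof -
  have inj: "inj (occ_in_child v cs i)" for i
    by (auto simp: inj_on_def occ_in_child_def prod_eq_iff)
  have disj: "occ_in_child v cs i ` occurrences (cs ! i) \<inter> occ_in_child v cs j ` occurrences (cs ! j) = {}"
    if "i < length cs" "j < length cs" "i \<noteq> j" for i j
    using that by (auto simp: occ_in_child_def) (metis length_take min.absorb4)
  have "sum h (\<Union>i<length cs. occ_in_child v cs i ` occurrences (cs ! i)) =
      (\<Sum>i<length cs. \<Sum>x\<in>occurrences (cs ! i). h (occ_in_child v cs i x))"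
    by (subst sum.UNION_disjoint)
      (auto simp: finite_occurrences disj sum.reindex[OF inj_on_subset[OF inj subset_UNIV]])
  moreover have "([], Node v cs) \<notin> (\<Union>i<length cs. occ_in_child v cs i ` occurrences (cs ! i))"
    by (auto simp: occ_in_child_def)
  ultimately show ?thesis
    by (simp add: occurrences_Node finite_occurrences)
qed

fun sum_subtrees :: "(ptree \<Rightarrow> nat) \<Rightarrow> ptree \<Rightarrow> nat" where
  "sum_subtrees g (Node v cs) = g (Node v cs) + sum_list (map (sum_subtrees g) cs)"

lemma sum_list_map_eq_sum_nth: "sum_list (map f xs) = (\<Sum>i<length xs. f (xs ! i))"
  by (simp add: sum_list_sum_nth atLeast0LessThan)

lemma sum_occurrences_snd: "(\<Sum>x\<in>occurrences t. g (snd x)) = sum_subtrees g t"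
  by (induction t) (simp add: sum_occurrences_Node occ_in_child_def sum_list_map_eq_sum_nth)

lemma sum_proper_occurrences_snd:
  "(\<Sum>x\<in>occurrences t. if fst x = [] then 0 else g (snd x)) + g t = sum_subtrees g t"
  by (cases t) (simp add: sum_occurrences_Node occ_in_child_def sum_occurrences_snd
      sum_list_map_eq_sum_nth)

fun children :: "ptree \<Rightarrow> ptree list" where
  "children (Node v cs) = cs"

lemma sum_subtrees_one: "sum_subtrees (\<lambda>_. 1) t = length (labels t)"
  by (induction t) (simp add: length_concat o_def cong: map_cong)

lemma sum_subtrees_children: "sum_subtrees (\<lambda>s. length (children s)) t + 1 = length (labels t)"
proof (induction t)
  case (Node v cs)
  have "sum_list (map (\<lambda>c. length (labels c)) cs) =
      sum_list (map (\<lambda>c. sum_subtrees (\<lambda>s. length (children s)) c + 1) cs)"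
    using Node.IH by (intro arg_cong[where f = sum_list] map_cong) auto
  also have "\<dots> = sum_list (map (sum_subtrees (\<lambda>s. length (children s))) cs) + length cs"
    by (induction cs) auto
  finally show ?case
    by (simp add: length_concat o_def)
qed

lemma sum_subtrees_improper:
  "sum_subtrees (\<lambda>s. count_improper (root s) (map beta (children s))) t = imp_tree t"
  by (induction t) (simp cong: map_cong)

section \<open>Inserting a new maximal label\<close>

text \<open>The three ways of inserting a label N larger than all others at a vertex s = Node u cs:
  as a new leaf child of s at position i; as a new parent of s; or, for an improper edge from
  u to its j-th child w, by letting N take the place of s, with children the children of u left
  of w followed by w and Node u R, where R are the children right of w (w first iff b).\<close>

datatype insertion = Ins_leaf nat | Ins_parent | Ins_split nat bool

fun insert_at :: "nat \<Rightarrow> ptree \<Rightarrow> insertion \<Rightarrow> ptree" where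
  "insert_at N (Node v cs) (Ins_leaf i) = Node v (take i cs @ Node N [] # drop i cs)"
| "insert_at N s Ins_parent = Node N [s]"
| "insert_at N (Node u cs) (Ins_split j b) = Node N (take j cs @
     (if b then [cs ! j, Node u (drop (Suc j) cs)] else [Node u (drop (Suc j) cs), cs ! j]))"

fun admissible :: "ptree \<Rightarrow> insertion \<Rightarrow> bool" where
  "admissible (Node v cs) (Ins_leaf i) \<longleftrightarrow> i \<le> length cs"
| "admissible s Ins_parent \<longleftrightarrow> True"
| "admissible (Node u cs) (Ins_split j b) \<longleftrightarrow> j < length cs \<and> improper_at u cs j"

fun imp_gain :: "insertion \<Rightarrow> nat" where
  "imp_gain (Ins_leaf i) = 0"
| "imp_gain Ins_parent = 1"
| "imp_gain (Ins_split j b) = (if b then 1 else 0)"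

fun eld_gain :: "ptree \<Rightarrow> insertion \<Rightarrow> nat" where
  "eld_gain (Node v cs) (Ins_leaf i) = (if i < length cs then 1 else 0)"
| "eld_gain s Ins_parent = 0"
| "eld_gain s (Ins_split j b) = (if b then 0 else 1)"

lemma imp_gain_le_1: "imp_gain c \<le> 1"
  by (cases c) auto

lemma insert_leaf_local:
  assumes lt: "\<forall>x\<in>set (labels (Node v (L @ R))). x < N"
  shows "beta (Node v (L @ Node N [] # R)) = beta (Node v (L @ R))"
    "eld_tree (Node v (L @ Node N [] # R)) = eld_tree (Node v (L @ R)) + (if R = [] then 0 else 1)"
    "imp_tree (Node v (L @ Node N [] # R)) = imp_tree (Node v (L @ R))"
proof -
  have small: "beta c < N" if "c \<in> set (L @ R)" for c
    using lt that by (intro beta_less) auto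
  have "Min (insert v (beta ` set (L @ R)) \<union> {N}) = Min (insert v (beta ` set (L @ R)))"
    using lt by (intro Min_Un_eq_Min) auto
  then show "beta (Node v (L @ Node N [] # R)) = beta (Node v (L @ R))"
    by (simp add: beta_Node insert_commute)
  have cong: "\<forall>b\<in>set (map beta L).
      (\<exists>c\<in>set (N # map beta R). c < b) \<longleftrightarrow> (\<exists>c\<in>set (map beta R). c < b)"
    using small by (auto dest: less_asym)
  have "(\<exists>c\<in>set (map beta R). c < N) \<longleftrightarrow> R \<noteq> []"
    using small by (cases R) auto
  then show "eld_tree (Node v (L @ Node N [] # R)) = eld_tree (Node v (L @ R)) + (if R = [] then 0 else 1)"
    using count_elder_append_cong[OF cong] by auto
  show "imp_tree (Node v (L @ Node N [] # R)) = imp_tree (Node v (L @ R))"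
    using count_improper_append_cong[OF cong, of v v] lt by auto
qed

lemma insert_parent_local:
  assumes "\<forall>x\<in>set (labels s). x < N"
  shows "beta (Node N [s]) = beta s" "eld_tree (Node N [s]) = eld_tree s"
    "imp_tree (Node N [s]) = imp_tree s + 1"
  using beta_less[OF assms] by (simp_all add: beta_Node)

lemma improper_at_append_Cons:
  "improper_at u (L @ w # R) (length L) \<longleftrightarrow> \<not> ((\<exists>b\<in>set (map beta R). b < beta w) \<or> u < beta w)"
  unfolding improper_at_def
  by (induction L) (simp_all add: elder_at_Cons_Suc elder_at_Cons_0)

lemma beta_improper_child_less:
  assumes d: "distinct (labels (Node u (L @ w # R)))"
    and imp: "improper_at u (L @ w # R) (length L)"
  shows "\<forall>c\<in>set R. beta w < beta c" "beta w < u" "beta w < beta (Node u R)"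
proof -
  have dis: "set (labels w) \<inter> set (concat (map labels R)) = {}" "u \<notin> set (labels w)"
    using d by auto
  have "beta c \<noteq> beta w" if "c \<in> set R" for c
  proof -
    have "beta c \<in> set (concat (map labels R))"
      using that beta_in_labels[of c] by auto
    then show ?thesis
      using dis(1) beta_in_labels[of w] by (metis IntI empty_iff)
  qed
  then show R: "\<forall>c\<in>set R. beta w < beta c"
    using imp unfolding improper_at_append_Cons by force
  have "beta w \<noteq> u"
    using dis(2) beta_in_labels[of w] by auto
  then show U: "beta w < u"
    using imp unfolding improper_at_append_Cons by simp
  show "beta w < beta (Node u R)"
    unfolding beta_Node using R U by simp
qed

lemma insert_split_local:
  assumes lt: "\<forall>x\<in>set (labels (Node u (L @ w # R))). x < N"
    and d: "distinct (labels (Node u (L @ w # R)))"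
    and imp: "improper_at u (L @ w # R) (length L)"
    and P: "P = [w, Node u R] \<or> P = [Node u R, w]"
  shows "beta (Node N (L @ P)) = beta (Node u (L @ w # R))"
    "eld_tree (Node N (L @ P)) = eld_tree (Node u (L @ w # R)) + count_elder (map beta P)"
    "imp_tree (Node N (L @ P)) + 1 = imp_tree (Node u (L @ w # R)) + count_improper N (map beta P)"
proof -
  note w = beta_improper_child_less[OF d imp]
  let ?bw = "beta w" and ?bu = "beta (Node u R)"
  have wN: "?bw < N" and uN: "u < N"
    using lt beta_in_labels[of w] by auto
  have "Min (insert N (beta ` set (L @ P))) = Min (insert ?bw (beta ` set L) \<union> {N, ?bu})"
    by (intro arg_cong[where f = Min]) (use P in auto)
  also have "\<dots> = Min (insert ?bw (beta ` set L))"
    using w wN by (intro Min_Un_eq_Min) auto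
  also have "\<dots> = Min (insert ?bw (beta ` set L) \<union> insert u (beta ` set R))"
    using w by (intro Min_Un_eq_Min[symmetric]) auto
  also have "\<dots> = Min (insert u (beta ` set (L @ w # R)))"
    by (intro arg_cong[where f = Min]) auto
  finally show "beta (Node N (L @ P)) = beta (Node u (L @ w # R))"
    by (simp only: beta_Node)
  have smaller_than_w: "(\<exists>c\<in>set (map beta P). c < b) \<longleftrightarrow> ?bw < b"
    "(\<exists>c\<in>set (?bw # map beta R). c < b) \<longleftrightarrow> ?bw < b" for b
    using P w by (auto intro: less_trans)
  have cong: "\<forall>b\<in>set (map beta L).
      (\<exists>c\<in>set (map beta P). c < b) \<longleftrightarrow> (\<exists>c\<in>set (?bw # map beta R). c < b)"
    using smaller_than_w by simp
  have cong': "\<forall>b\<in>set (map beta L). \<not> (\<exists>c\<in>set (map beta P). c < b) \<longrightarrow> (N < b \<longleftrightarrow> u < b)"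
    using smaller_than_w w(2) uN by auto
  have w_min: "\<not> (\<exists>c\<in>set R. beta c < ?bw)" "\<not> u < ?bw"
    using w(1,2) by (auto dest: less_asym)
  show "eld_tree (Node N (L @ P)) = eld_tree (Node u (L @ w # R)) + count_elder (map beta P)"
    using count_elder_append_cong[OF cong] P by (elim disjE) (simp_all add: w_min)
  show "imp_tree (Node N (L @ P)) + 1 =
      imp_tree (Node u (L @ w # R)) + count_improper N (map beta P)"
    using count_improper_append_cong[OF cong cong'] P by (elim disjE) (simp_all add: w_min)
qed

lemma split_child_decomp:
  assumes "admissible (Node u cs) (Ins_split j b)"
  obtains L w R where "cs = L @ w # R" "length L = j" "improper_at u (L @ w # R) (length L)"
    "insert_at N (Node u cs) (Ins_split j b) =
      Node N (L @ (if b then [w, Node u R] else [Node u R, w]))"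
proof -
  have j: "j < length cs" "improper_at u cs j"
    using assms by auto
  show ?thesis
    using that[of "take j cs" "cs ! j" "drop (Suc j) cs"] j id_take_nth_drop[OF j(1)] by simp
qed

lemma insert_at_split_local:
  assumes lt: "\<forall>x\<in>set (labels s). x < N" and d: "distinct (labels s)"
    and adm: "admissible s (Ins_split j b)"
  shows "beta (insert_at N s (Ins_split j b)) = beta s \<and>
    eld_tree (insert_at N s (Ins_split j b)) = eld_tree s + eld_gain s (Ins_split j b) \<and>
    imp_tree (insert_at N s (Ins_split j b)) = imp_tree s + imp_gain (Ins_split j b)"
proof -
  obtain u cs where s: "s = Node u cs" by (cases s)
  obtain L w R where cs: "cs = L @ w # R" and imp: "improper_at u (L @ w # R) (length L)"
    and ins: "insert_at N s (Ins_split j b) = Node N (L @ (if b then [w, Node u R] else [Node u R, w]))"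
    using split_child_decomp[of u cs j b N] adm s by metis
  let ?P = "if b then [w, Node u R] else [Node u R, w]"
  have lt': "\<forall>x\<in>set (labels (Node u (L @ w # R))). x < N"
    and d': "distinct (labels (Node u (L @ w # R)))"
    using lt d s cs by simp_all
  note w = beta_improper_child_less[OF d' imp]
  have "beta w < N" "beta (Node u R) < N"
    using lt' w(2) beta_le[of u "Node u R"] by auto
  then have "count_elder (map beta ?P) = eld_gain s (Ins_split j b)"
    "count_improper N (map beta ?P) = imp_gain (Ins_split j b) + 1"
    using w(3) by (auto dest: less_asym)
  moreover have "?P = [w, Node u R] \<or> ?P = [Node u R, w]"
    by simp
  note local = insert_split_local[OF lt' d' imp this]
  ultimately show ?thesis
    unfolding ins using local s cs by (simp del: eld_tree_Node imp_tree_Node)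
qed

lemma insert_at_local:
  assumes lt: "\<forall>x\<in>set (labels s). x < N" and d: "distinct (labels s)"
    and adm: "admissible s c"
  shows "beta (insert_at N s c) = beta s" "eld_tree (insert_at N s c) = eld_tree s + eld_gain s c"
    "imp_tree (insert_at N s c) = imp_tree s + imp_gain c"
proof -
  obtain u cs where s: "s = Node u cs" by (cases s)
  have "beta (insert_at N s c) = beta s \<and> eld_tree (insert_at N s c) = eld_tree s + eld_gain s c
    \<and> imp_tree (insert_at N s c) = imp_tree s + imp_gain c"
  proof (cases c)
    case (Ins_leaf i)
    have "\<forall>x\<in>set (labels (Node u (take i cs @ drop i cs))). x < N"
      using lt s by simp
    then show ?thesis
      using insert_leaf_local[of u "take i cs" "drop i cs" N] adm s Ins_leaf by simp
  next
    case Ins_parent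
    then show ?thesis
      using insert_parent_local[OF lt] by simp
  next
    case (Ins_split j b)
    then show ?thesis
      using insert_at_split_local[OF lt d] adm by simp
  qed
  then show "beta (insert_at N s c) = beta s" "eld_tree (insert_at N s c) = eld_tree s + eld_gain s c"
    "imp_tree (insert_at N s c) = imp_tree s + imp_gain c"
    by simp_all
qed

lemma mset_labels_insert_at:
  assumes "admissible s c"
  shows "mset (labels (insert_at N s c)) = mset (labels s) + {#N#}"
proof -
  obtain u cs where s: "s = Node u cs" by (cases s)
  show ?thesis
  proof (cases c)
    case (Ins_leaf i)
    have "mset (concat (map labels cs)) =
        mset (concat (map labels (take i cs))) + mset (concat (map labels (drop i cs)))"
      by (subst (1) append_take_drop_id[symmetric, of cs i]) (simp only: map_append concat_append mset_append)
    then show ?thesis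
      using s Ins_leaf by simp
  next
    case (Ins_split j b)
    then obtain L w R where "cs = L @ w # R"
      "insert_at N s c = Node N (L @ (if b then [w, Node u R] else [Node u R, w]))"
      using split_child_decomp[of u cs j b N] assms s by metis
    then show ?thesis
      using s by auto
  qed simp
qed

section \<open>Forests as trees below a virtual root 0\<close>

lemma replace_subtree_of_forest:
  assumes F: "plug fs s = Node 0 F" and G: "plug fs X = Node 0 G" and "fs \<noteq> []"
    and b: "beta X = beta s" and rt: "root X = root s \<or> 2 \<le> length fs"
  shows "length G = length F" "\<forall>i<length F. root (G ! i) = root (F ! i)"
    "mset (concat (map labels G)) + mset (labels s) = mset (concat (map labels F)) + mset (labels X)"
    "improper_count G + imp_tree s = improper_count F + imp_tree X"
    "eld G + eld_tree s = eld F + eld_tree X"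
proof -
  obtain v L R fs' where fs: "fs = Fr v L R # fs'"
    using \<open>fs \<noteq> []\<close> by (metis frame.exhaust list.exhaust)
  have FG: "F = L @ plug fs' s # R" "G = L @ plug fs' X # R"
    using F G fs by simp_all
  show "length G = length F"
    using FG by simp
  have "root (plug fs' X) = root (plug fs' s)"
  proof (cases fs')
    case (Cons g gs)
    then show ?thesis by (cases g) simp
  qed (use rt fs in simp)
  then show "\<forall>i<length F. root (G ! i) = root (F ! i)"
    unfolding FG by (auto simp: nth_append nth_Cons split: nat.split)
  show "mset (concat (map labels G)) + mset (labels s) = mset (concat (map labels F)) + mset (labels X)"
    using mset_labels_plug[of fs' X s] unfolding FG by (simp add: algebra_simps)
  show "improper_count G + imp_tree s = improper_count F + imp_tree X"
    using imp_tree_plug[OF b, of fs'] unfolding FG improper_count_def by simp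
  show "eld G + eld_tree s = eld F + eld_tree X"
    using eld_tree_plug[OF b, of fs'] unfolding FG eld_def by simp
qed

lemma distinct_labels_iff_mset:
  "distinct xs \<and> set xs = {1..n} \<longleftrightarrow> mset xs = mset_set {1..(n::nat)}"
proof
  assume xs: "mset xs = mset_set {1..n}"
  have "mset_set {1..n} = mset [1..<Suc n]"
    by (simp only: mset_upt atLeastLessThanSuc_atLeastAtMost)
  then have "distinct xs"
    using mset_eq_imp_distinct_iff[of xs "[1..<Suc n]"] xs by simp
  moreover have "set xs = {1..n}"
    using arg_cong[OF xs, of set_mset] by simp
  ultimately show "distinct xs \<and> set xs = {1..n}" ..
qed (simp add: mset_set_set[symmetric])

lemma forests_replace_iff:
  assumes "plug fs s = Node 0 F" and "plug fs X = Node 0 G" and "fs \<noteq> []"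
    and "beta X = beta s" and "root X = root s \<or> 2 \<le> length fs"
    and m: "mset (labels X) = mset (labels s) + {#Suc n#}" and im: "imp_tree X = imp_tree s + d"
  shows "F \<in> forests n k r \<longleftrightarrow> G \<in> forests (Suc n) (k + d) r"
proof -
  note replace = replace_subtree_of_forest[OF assms(1-5)]
  have "mset (concat (map labels G)) = mset (concat (map labels F)) + {#Suc n#}"
    using replace(3) m by (metis add.assoc add.commute add_left_cancel)
  moreover have "mset_set {1..Suc n} = mset_set {1..n} + {#Suc n#}"
    by (simp add: atLeastAtMostSuc_conv)
  ultimately have "distinct (concat (map labels F)) \<and> set (concat (map labels F)) = {1..n} \<longleftrightarrow>
      distinct (concat (map labels G)) \<and> set (concat (map labels G)) = {1..Suc n}"
    unfolding distinct_labels_iff_mset by simp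
  then show ?thesis
    using replace(1,2,4) im unfolding forests_def by auto
qed

lemma disjoint_labels_nth:
  assumes d: "distinct (concat (map labels F))" and ij: "i < j" "j < length F"
  shows "set (labels (F ! i)) \<inter> set (labels (F ! j)) = {}"
proof -
  have "distinct (concat (map labels (take j F @ F ! j # drop (Suc j) F)))"
    using d id_take_nth_drop[OF ij(2)] by metis
  then have "set (concat (map labels (take j F))) \<inter> set (labels (F ! j)) = {}"
    by auto
  moreover have "F ! i \<in> set (take j F)"
    using ij by (metis in_set_conv_nth length_take min.absorb4 nth_take)
  ultimately show ?thesis
    by auto
qed

lemma nonroot_label_gt:
  assumes F: "F \<in> forests n k r" and i: "i < r" and x: "x \<in> set (labels (F ! i))"
    and "x \<noteq> i + 1"
  shows "r < x"
proof (rule ccontr)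
  assume "\<not> r < x"
  have lF: "length F = r" and rt: "\<forall>i<r. root (F ! i) = i + 1"
    and d: "distinct (concat (map labels F))" and s: "set (concat (map labels F)) = {1..n}"
    using F by (auto simp: forests_def)
  have "x \<in> set (concat (map labels F))"
    using x i lF by auto
  then have "1 \<le> x"
    using s by auto
  then have j: "x - 1 < r" "x - 1 \<noteq> i" "x = root (F ! (x - 1))"
    using \<open>\<not> r < x\<close> \<open>x \<noteq> i + 1\<close> rt by auto
  have "x \<in> set (labels (F ! (x - 1)))"
    using j(3) root_in_labels by metis
  moreover have "set (labels (F ! i)) \<inter> set (labels (F ! (x - 1))) = {}"
    using disjoint_labels_nth[OF d] i j lF by (metis Int_commute linorder_neqE_nat)
  ultimately show False
    using x by blast
qed

lemma forest_root_edges_proper: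
  assumes F: "F \<in> forests n k r" and e: "plug [Fr v L R] (Node u cs) = Node 0 F"
    and j: "j < length cs"
  shows "\<not> improper_at u cs j"
proof -
  have FF: "F = L @ Node u cs # R" and lF: "length F = r" and rt: "\<forall>i<r. root (F ! i) = i + 1"
    and d: "distinct (concat (map labels F))"
    using e F by (auto simp: forests_def)
  then have i: "length L < r" "F ! length L = Node u cs"
    by auto
  then have "u = length L + 1"
    using rt by force
  have "cs ! j \<in> set cs"
    using j by simp
  moreover have "u \<notin> set (concat (map labels cs))"
    using d FF by simp
  ultimately have "beta (cs ! j) \<in> set (labels (Node u cs))" "beta (cs ! j) \<noteq> u"
    using beta_in_labels[of "cs ! j"] by auto
  then have "r < beta (cs ! j)"
    using nonroot_label_gt[OF F i(1)] i \<open>u = length L + 1\<close> by auto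
  then show ?thesis
    unfolding improper_at_def using i \<open>u = length L + 1\<close> by simp
qed

section \<open>The insertion bijection\<close>

fun ins_context :: "frame list \<Rightarrow> ptree \<Rightarrow> insertion \<Rightarrow> frame list" where
  "ins_context fs (Node v cs) (Ins_leaf i) = fs @ [Fr v (take i cs) (drop i cs)]"
| "ins_context fs s Ins_parent = fs"
| "ins_context fs s (Ins_split j b) = fs"

fun ins_children :: "ptree \<Rightarrow> insertion \<Rightarrow> ptree list" where
  "ins_children s (Ins_leaf i) = []"
| "ins_children s Ins_parent = [s]"
| "ins_children (Node u cs) (Ins_split j b) = take j cs @
     (if b then [cs ! j, Node u (drop (Suc j) cs)] else [Node u (drop (Suc j) cs), cs ! j])"

lemma plug_insert_at:
  "plug fs (insert_at N s c) = plug (ins_context fs s c) (Node N (ins_children s c))"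
  by (cases s; cases c) (simp_all add: plug_append)

lemma length_ins_children:
  "admissible s c \<Longrightarrow>
    length (ins_children s c) = (case c of Ins_leaf i \<Rightarrow> 0 | Ins_parent \<Rightarrow> 1 | Ins_split j b \<Rightarrow> j + 2)"
  by (cases s; cases c) auto

lemma ins_children_split_inj:
  assumes adm: "admissible (Node u cs) (Ins_split j b)" "admissible (Node u' cs') (Ins_split j' b')"
    and d: "distinct (labels (Node u cs))" "distinct (labels (Node u' cs'))"
    and eq: "ins_children (Node u cs) (Ins_split j b) = ins_children (Node u' cs') (Ins_split j' b')"
  shows "u = u' \<and> cs = cs' \<and> j = j' \<and> b = b'"
proof -
  obtain L w R where cs: "cs = L @ w # R" "length L = j" and imp: "improper_at u (L @ w # R) (length L)"
    using split_child_decomp[OF adm(1)] by metis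
  obtain L' w' R' where cs': "cs' = L' @ w' # R'" "length L' = j'"
    and imp': "improper_at u' (L' @ w' # R') (length L')"
    using split_child_decomp[OF adm(2)] by metis
  have lt: "beta w < beta (Node u R)" "beta w' < beta (Node u' R')"
    using beta_improper_child_less(3)[OF _ imp] beta_improper_child_less(3)[OF _ imp'] d cs cs'
    by simp_all
  have "ins_children (Node u cs) (Ins_split j b) = L @ (if b then [w, Node u R] else [Node u R, w])"
    "ins_children (Node u' cs') (Ins_split j' b') =
      L' @ (if b' then [w', Node u' R'] else [Node u' R', w'])"
    unfolding cs(1) cs'(1) cs(2)[symmetric] cs'(2)[symmetric] by simp_all
  then have "L @ (if b then [w, Node u R] else [Node u R, w]) =
      L' @ (if b' then [w', Node u' R'] else [Node u' R', w'])"
    using eq by simp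
  then have "L = L'" and P: "(if b then [w, Node u R] else [Node u R, w]) =
      (if b' then [w', Node u' R'] else [Node u' R', w'])"
    by (simp_all add: append_eq_append_conv)
  have "b = b'"
    using P lt by (cases b; cases b') auto
  then have "w = w'" "u = u'" "R = R'"
    using P by (cases b; simp)+
  then show ?thesis
    using \<open>L = L'\<close> \<open>b = b'\<close> cs cs' by simp
qed

lemma insert_at_inj:
  assumes e: "plug fs (insert_at N s c) = plug fs' (insert_at N s' c')"
    and d: "distinct (labels (plug fs (insert_at N s c)))"
    and adm: "admissible s c" "admissible s' c'"
    and ds: "distinct (labels s)" "distinct (labels s')"
  shows "fs = fs' \<and> s = s' \<and> c = c'"
proof -
  have eqs: "ins_context fs s c = ins_context fs' s' c'" "ins_children s c = ins_children s' c'"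
    using plug_Node_unique[of "ins_context fs s c" N "ins_children s c"] d e
    by (auto simp: plug_insert_at)
  obtain v cs v' cs' where s: "s = Node v cs" and s': "s' = Node v' cs'"
    by (meson ptree.exhaust)
  have len: "length (ins_children s c) = length (ins_children s' c')"
    using eqs by simp
  show ?thesis
  proof (cases c)
    case (Ins_leaf i)
    then obtain i' where c': "c' = Ins_leaf i'"
      using len length_ins_children[OF adm(1)] length_ins_children[OF adm(2)]
      by (cases c') auto
    then have "fs = fs'" "v = v'" "take i cs = take i' cs'" "drop i cs = drop i' cs'"
      using eqs(1) s s' Ins_leaf by auto
    moreover have "i \<le> length cs" "i' \<le> length cs'"
      using adm s s' Ins_leaf c' by auto
    ultimately show ?thesis
      using s s' Ins_leaf c' by (metis append_take_drop_id length_take min.absorb2)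
  next
    case Ins_parent
    then have "c' = Ins_parent"
      using len length_ins_children[OF adm(2)] by (cases c') auto
    then show ?thesis
      using eqs Ins_parent by simp
  next
    case (Ins_split j b)
    then obtain j' b' where c': "c' = Ins_split j' b'"
      using len length_ins_children[OF adm(1)] length_ins_children[OF adm(2)]
      by (cases c') auto
    then show ?thesis
      using ins_children_split_inj[of v cs j b v' cs' j' b'] adm ds eqs s s' Ins_split by simp
  qed
qed

lemma labels_below_insert_at:
  assumes adm: "admissible s c" and d: "distinct (labels (insert_at N s c))"
    and le: "\<forall>x\<in>set (labels (insert_at N s c)). x \<le> N"
  shows "distinct (labels s)" "\<forall>x\<in>set (labels s). x < N"
proof -
  have m: "mset (labels (insert_at N s c)) = mset (labels s @ [N])"
    using mset_labels_insert_at[OF adm] by simp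
  then have "distinct (labels s @ [N])"
    using mset_eq_imp_distinct_iff d by blast
  moreover have "set (labels s) \<subseteq> set (labels (insert_at N s c))"
    using arg_cong[OF m, of set_mset] by auto
  ultimately show "distinct (labels s)" "\<forall>x\<in>set (labels s). x < N"
    using le by (auto simp: le_less)
qed

lemma split_insertion_exists:
  assumes "distinct (labels (Node N (L @ [x, y])))"
  shows "\<exists>s j b. admissible s (Ins_split j b) \<and> insert_at N s (Ins_split j b) = Node N (L @ [x, y])"
proof -
  have "set (labels x) \<inter> set (labels y) = {}"
    using assms by auto
  then have "beta x \<noteq> beta y"
    using beta_in_labels[of x] beta_in_labels[of y] by auto
  then consider "beta x < beta y" | "beta y < beta x"
    by linarith
  then show ?thesis
  proof cases
    case 1
    obtain u R where y: "y = Node u R" by (cases y)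
    have "beta x < u" "\<forall>c\<in>set R. beta x < beta c"
      using 1 unfolding y beta_Node by simp_all
    then have "improper_at u (L @ x # R) (length L)"
      unfolding improper_at_append_Cons by (auto dest: less_asym)
    then show ?thesis
      using y by (intro exI[of _ "Node u (L @ x # R)"] exI[of _ "length L"] exI[of _ True]) simp
  next
    case 2
    obtain u R where x: "x = Node u R" by (cases x)
    have "beta y < u" "\<forall>c\<in>set R. beta y < beta c"
      using 2 unfolding x beta_Node by simp_all
    then have "improper_at u (L @ y # R) (length L)"
      unfolding improper_at_append_Cons by (auto dest: less_asym)
    then show ?thesis
      using x by (intro exI[of _ "Node u (L @ y # R)"] exI[of _ "length L"] exI[of _ False]) simp
  qed
qed

lemma node_is_insertion:
  assumes d: "distinct (labels (Node N cs))" and deep: "2 \<le> length fs"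
  shows "\<exists>fs' s c. plug fs' (insert_at N s c) = plug fs (Node N cs) \<and> fs' \<noteq> [] \<and>
    admissible s c \<and> (c = Ins_parent \<longrightarrow> 2 \<le> length fs') \<and>
    (root (insert_at N s c) = root s \<or> 2 \<le> length fs')"
proof (cases cs rule: rev_cases)
  case Nil
  obtain fs0 f where "fs = fs0 @ [f]"
    using deep by (cases fs rule: rev_cases) auto
  moreover obtain v L R where "f = Fr v L R"
    by (cases f)
  ultimately have fs: "fs = fs0 @ [Fr v L R]"
    by simp
  then have "fs0 \<noteq> []"
    using deep by auto
  moreover have "plug fs0 (insert_at N (Node v (L @ R)) (Ins_leaf (length L))) = plug fs (Node N cs)"
    using fs Nil by (simp add: plug_append)
  ultimately show ?thesis
    by (intro exI[of _ fs0] exI[of _ "Node v (L @ R)"] exI[of _ "Ins_leaf (length L)"]) simp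
next
  case (snoc cs0 y)
  show ?thesis
  proof (cases cs0 rule: rev_cases)
    case Nil
    then show ?thesis
      using snoc deep by (intro exI[of _ fs] exI[of _ y] exI[of _ Ins_parent]) auto
  next
    case (snoc L x)
    then obtain s j b where "admissible s (Ins_split j b)" "insert_at N s (Ins_split j b) = Node N cs"
      using split_insertion_exists[of N L x y] d \<open>cs = cs0 @ [y]\<close> by auto
    then show ?thesis
      using deep by (intro exI[of _ fs] exI[of _ s] exI[of _ "Ins_split j b"]) auto
  qed
qed

lemma max_label_deep:
  assumes G: "G \<in> forests (Suc n) k r" and "r \<le> n"
  obtains fs cs where "Node 0 G = plug fs (Node (Suc n) cs)" "2 \<le> length fs"
proof -
  have "Suc n \<in> set (labels (Node 0 G))"
    using G by (simp add: forests_def)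
  then obtain fs cs where dec: "Node 0 G = plug fs (Node (Suc n) cs)"
    using plug_exists by blast
  have "2 \<le> length fs"
  proof (rule ccontr)
    assume "\<not> 2 \<le> length fs"
    moreover have "fs \<noteq> []"
      using dec by auto
    ultimately obtain f where "fs = [f]"
      by (cases fs) (auto simp: Suc_le_eq)
    moreover obtain v L R where "f = Fr v L R"
      by (cases f)
    ultimately have fs: "fs = [Fr v L R]"
      by simp
    then have "G = L @ Node (Suc n) cs # R"
      using dec by simp
    moreover have "length G = r" "\<forall>i<r. root (G ! i) = i + 1"
      using G by (simp_all add: forests_def)
    ultimately have "length L < r" "root (G ! length L) = Suc n"
      by auto
    then have "Suc n = length L + 1" "length L < r"
      using \<open>\<forall>i<r. root (G ! i) = i + 1\<close> by auto
    then show False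
      using \<open>r \<le> n\<close> by simp
  qed
  then show ?thesis
    using dec that by blast
qed

lemma forest_is_insertion:
  assumes G: "G \<in> forests (Suc n) k r" and "r \<le> n"
  obtains fs s c where "plug fs (insert_at (Suc n) s c) = Node 0 G" "fs \<noteq> []" "admissible s c"
    "c = Ins_parent \<longrightarrow> 2 \<le> length fs" "root (insert_at (Suc n) s c) = root s \<or> 2 \<le> length fs"
    "distinct (labels s)" "\<forall>x\<in>set (labels s). x < Suc n"
proof -
  obtain fs0 cs where dec: "Node 0 G = plug fs0 (Node (Suc n) cs)" and deep: "2 \<le> length fs0"
    using max_label_deep[OF assms] .
  have dG: "distinct (labels (Node 0 G))" and leG: "\<forall>x\<in>set (labels (Node 0 G)). x \<le> Suc n"
    using G by (auto simp: forests_def)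
  then have "distinct (labels (Node (Suc n) cs))"
    using dec distinct_labels_plugD by metis
  then obtain fs s c where ins: "plug fs (insert_at (Suc n) s c) = Node 0 G" "fs \<noteq> []"
    "admissible s c" "c = Ins_parent \<longrightarrow> 2 \<le> length fs"
    "root (insert_at (Suc n) s c) = root s \<or> 2 \<le> length fs"
    using node_is_insertion[OF _ deep] dec by metis
  have "distinct (labels (insert_at (Suc n) s c))"
    using dG ins(1) distinct_labels_plugD by metis
  moreover have "\<forall>x\<in>set (labels (insert_at (Suc n) s c)). x \<le> Suc n"
    using leG ins(1) labels_plug_subset[of "insert_at (Suc n) s c" fs] by auto
  ultimately show ?thesis
    using that ins labels_below_insert_at[OF ins(3)] by blast
qed

text \<open>The condition \<open>fst x \<noteq> []\<close> excludes the virtual root.\<close>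

definition vertex_occs :: "ptree list \<Rightarrow> (frame list \<times> ptree) set" where
  "vertex_occs F = {x \<in> occurrences (Node 0 F). fst x \<noteq> []}"

text \<open>\<open>choices x g\<close> are the insertions at x that create g improper edges; no parent may be
  inserted above a root of the forest, that is, at an occurrence with a context of length 1.\<close>

definition choices :: "frame list \<times> ptree \<Rightarrow> nat \<Rightarrow> insertion set" where
  "choices x g = {c. admissible (snd x) c \<and> imp_gain c = g \<and> (c = Ins_parent \<longrightarrow> 2 \<le> length (fst x))}"

definition insertions :: "nat \<Rightarrow> nat \<Rightarrow> nat \<Rightarrow> (ptree list \<times> (frame list \<times> ptree) \<times> insertion) set"
  where "insertions n k r =
    (SIGMA F:forests n k r. SIGMA x:vertex_occs F. choices x 0) \<union>
    (if k = 0 then {} else SIGMA F:forests n (k - 1) r. SIGMA x:vertex_occs F. choices x 1)"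

definition insert_max :: "nat \<Rightarrow> ptree list \<times> (frame list \<times> ptree) \<times> insertion \<Rightarrow> ptree list" where
  "insert_max N = (\<lambda>(F, (fs, s), c). children (plug fs (insert_at N s c)))"

lemma mem_insertions_iff:
  "(F, (fs, s), c) \<in> insertions n k r \<longleftrightarrow>
    F \<in> forests n (k - imp_gain c) r \<and> imp_gain c \<le> k \<and> plug fs s = Node 0 F \<and> fs \<noteq> [] \<and>
    admissible s c \<and> (c = Ins_parent \<longrightarrow> 2 \<le> length fs)"
  using imp_gain_le_1[of c]
  by (cases "imp_gain c") (auto simp: insertions_def vertex_occs_def choices_def occurrences_def)

lemma plug_eq_Node_children:
  assumes "fs \<noteq> []" and "plug fs s = Node 0 F"
  shows "plug fs X = Node 0 (children (plug fs X))"
proof -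
  obtain v L R fs' where "fs = Fr v L R # fs'"
    using assms(1) by (metis frame.exhaust list.exhaust)
  then show ?thesis
    using assms(2) by simp
qed

lemma labels_of_forest_subtree:
  assumes "F \<in> forests n k r" and "plug fs s = Node 0 F"
  shows "distinct (labels s)" "\<forall>x\<in>set (labels s). x < Suc n"
proof -
  have "distinct (labels (plug fs s))" "set (labels (plug fs s)) = insert 0 {1..n}"
    using assms by (auto simp: forests_def)
  then show "distinct (labels s)" "\<forall>x\<in>set (labels s). x < Suc n"
    using distinct_labels_plugD labels_plug_subset[of s fs] by auto
qed

lemma root_insert_at_forest_root:
  assumes "F \<in> forests n k r" and "plug fs s = Node 0 F" and "fs \<noteq> []"
    and "admissible s c" and "c = Ins_parent \<longrightarrow> 2 \<le> length fs"
  shows "root (insert_at N s c) = root s \<or> 2 \<le> length fs"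
proof (cases c)
  case (Ins_split j b)
  show ?thesis
  proof (rule ccontr)
    assume "\<not> ?thesis"
    then obtain f where "fs = [f]"
      using \<open>fs \<noteq> []\<close> by (cases fs) (auto simp: Suc_le_eq)
    moreover obtain v L R where "f = Fr v L R"
      by (cases f)
    ultimately have "fs = [Fr v L R]"
      by simp
    moreover obtain u cs where s: "s = Node u cs"
      by (cases s)
    ultimately show False
      using forest_root_edges_proper[OF assms(1)] assms(2,4) Ins_split by auto
  qed
qed (use assms(5) in \<open>cases s, auto\<close>)

lemma insert_max_props:
  assumes y: "(F, (fs, s), c) \<in> insertions n k r"
  shows "insert_max (Suc n) (F, (fs, s), c) \<in> forests (Suc n) k r"
    "eld (insert_max (Suc n) (F, (fs, s), c)) = eld F + eld_gain s c"
proof -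
  let ?X = "insert_at (Suc n) s c"
  have F: "F \<in> forests n (k - imp_gain c) r" "imp_gain c \<le> k" "plug fs s = Node 0 F"
    "fs \<noteq> []" "admissible s c" "c = Ins_parent \<longrightarrow> 2 \<le> length fs"
    using y unfolding mem_insertions_iff by auto
  have G: "plug fs ?X = Node 0 (insert_max (Suc n) (F, (fs, s), c))"
    unfolding insert_max_def using plug_eq_Node_children[OF F(4,3)] by simp
  note local = insert_at_local[OF labels_of_forest_subtree(2,1)[OF F(1,3)] F(5)]
  note rt = root_insert_at_forest_root[OF F(1,3-6)]
  have "insert_max (Suc n) (F, (fs, s), c) \<in> forests (Suc n) (k - imp_gain c + imp_gain c) r"
    using forests_replace_iff[OF F(3) G F(4) local(1) rt mset_labels_insert_at[OF F(5)] local(3)] F(1)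
    by simp
  then show "insert_max (Suc n) (F, (fs, s), c) \<in> forests (Suc n) k r"
    using F(2) by simp
  show "eld (insert_max (Suc n) (F, (fs, s), c)) = eld F + eld_gain s c"
    using replace_subtree_of_forest(5)[OF F(3) G F(4) local(1) rt] local(2) by simp
qed

lemma inj_on_insert_max: "inj_on (insert_max (Suc n)) (insertions n k r)"
proof (rule inj_onI)
  fix y y' assume y: "y \<in> insertions n k r" and y': "y' \<in> insertions n k r"
    and eq: "insert_max (Suc n) y = insert_max (Suc n) y'"
  obtain F fs s c F' fs' s' c' where yy: "y = (F, (fs, s), c)" "y' = (F', (fs', s'), c')"
    by (metis prod.exhaust)
  have F: "F \<in> forests n (k - imp_gain c) r" "plug fs s = Node 0 F" "fs \<noteq> []" "admissible s c"
    and F': "F' \<in> forests n (k - imp_gain c') r" "plug fs' s' = Node 0 F'" "fs' \<noteq> []"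
      "admissible s' c'"
    using y y' unfolding yy mem_insertions_iff by auto
  let ?G = "insert_max (Suc n) y"
  have "plug fs (insert_at (Suc n) s c) = Node 0 ?G"
    using plug_eq_Node_children[OF F(3,2)] unfolding yy insert_max_def by simp
  moreover have "plug fs' (insert_at (Suc n) s' c') = Node 0 ?G"
    using plug_eq_Node_children[OF F'(3,2)] eq unfolding yy insert_max_def by simp
  moreover have "distinct (labels (Node 0 ?G))"
    using insert_max_props(1) y unfolding yy by (fastforce simp: forests_def)
  ultimately have "fs = fs' \<and> s = s' \<and> c = c'"
    using insert_at_inj[OF _ _ F(4) F'(4)] labels_of_forest_subtree(1)[OF F(1,2)]
      labels_of_forest_subtree(1)[OF F'(1,2)] by metis
  then show "y = y'"
    using F(2) F'(2) yy by simp
qed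

lemma forests_Suc_subset_image:
  assumes "r \<le> n"
  shows "forests (Suc n) k r \<subseteq> insert_max (Suc n) ` insertions n k r"
proof
  fix G assume G: "G \<in> forests (Suc n) k r"
  obtain fs s c where ins: "plug fs (insert_at (Suc n) s c) = Node 0 G" "fs \<noteq> []" "admissible s c"
    "c = Ins_parent \<longrightarrow> 2 \<le> length fs" "root (insert_at (Suc n) s c) = root s \<or> 2 \<le> length fs"
    "distinct (labels s)" "\<forall>x\<in>set (labels s). x < Suc n"
    using forest_is_insertion[OF G assms] by blast
  define F where "F = children (plug fs s)"
  have F: "plug fs s = Node 0 F"
    unfolding F_def using plug_eq_Node_children[OF ins(2,1)] by simp
  note local = insert_at_local[OF ins(7,6,3)]
  have "improper_count G + imp_tree s = improper_count F + imp_tree (insert_at (Suc n) s c)"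
    using replace_subtree_of_forest(4)[OF F ins(1,2) local(1) ins(5)] .
  moreover have "improper_count G = k"
    using G by (simp add: forests_def)
  ultimately have k: "imp_gain c \<le> k"
    using local(3) by simp
  have "F \<in> forests n (k - imp_gain c) r \<longleftrightarrow> G \<in> forests (Suc n) (k - imp_gain c + imp_gain c) r"
    using forests_replace_iff[OF F ins(1,2) local(1) ins(5) mset_labels_insert_at[OF ins(3)] local(3)] .
  then have "(F, (fs, s), c) \<in> insertions n k r"
    unfolding mem_insertions_iff using G k F ins by simp
  moreover have "insert_max (Suc n) (F, (fs, s), c) = G"
    unfolding insert_max_def using ins(1) by simp
  ultimately show "G \<in> insert_max (Suc n) ` insertions n k r"
    by (metis image_eqI)
qed

lemma bij_betw_insert_max:
  assumes "r \<le> n"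
  shows "bij_betw (insert_max (Suc n)) (insertions n k r) (forests (Suc n) k r)"
  unfolding bij_betw_def
  using inj_on_insert_max forests_Suc_subset_image[OF assms] insert_max_props(1)
  by (fastforce simp: insertions_def)

section \<open>Counting insertions\<close>

lemma choices_0_eq:
  "choices (fs, Node v cs) 0 =
    Ins_leaf ` {..length cs} \<union> (\<lambda>j. Ins_split j False) ` {j. j < length cs \<and> improper_at v cs j}"
  unfolding choices_def by (auto elim: imp_gain.elims split: if_splits)

lemma choices_1_eq:
  "choices (fs, Node v cs) 1 =
    (if 2 \<le> length fs then {Ins_parent} else {}) \<union>
    (\<lambda>j. Ins_split j True) ` {j. j < length cs \<and> improper_at v cs j}"
  unfolding choices_def by (auto elim: imp_gain.elims split: if_splits)

lemma finite_choices: "finite (choices x g)"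
proof -
  obtain fs v cs where x: "x = (fs, Node v cs)"
    by (metis prod.exhaust ptree.exhaust)
  have "choices x g = {}" if "g \<noteq> 0" "g \<noteq> 1"
  proof -
    have "imp_gain c \<noteq> g" for c
      using that imp_gain_le_1[of c] by linarith
    then show ?thesis
      by (simp add: choices_def)
  qed
  then show ?thesis
    unfolding x using choices_0_eq[of fs v cs] choices_1_eq[of fs v cs]
    by (cases "g = 0"; cases "g = 1") auto
qed

lemma sum_choices_0:
  fixes t :: real
  shows "(\<Sum>c\<in>choices (fs, s) 0. t ^ (e + eld_gain s c)) =
    t ^ e * (1 + t * length (children s) + t * count_improper (root s) (map beta (children s)))"
proof -
  obtain v cs where s: "s = Node v cs" by (cases s)
  let ?I = "{j. j < length cs \<and> improper_at v cs j}"
  have "(\<Sum>c\<in>Ins_leaf ` {..length cs}. t ^ (e + eld_gain s c)) =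
      (\<Sum>i\<le>length cs. t ^ (e + eld_gain s (Ins_leaf i)))"
    by (simp add: sum.reindex inj_on_def)
  also have "\<dots> = t ^ e + length cs * t ^ Suc e"
    by (simp add: s lessThan_Suc_atMost[symmetric])
  finally have leaf: "(\<Sum>c\<in>Ins_leaf ` {..length cs}. t ^ (e + eld_gain s c)) = t ^ e + length cs * t ^ Suc e" .
  have split: "(\<Sum>c\<in>(\<lambda>j. Ins_split j False) ` ?I. t ^ (e + eld_gain s c)) = card ?I * t ^ Suc e"
    by (simp add: sum.reindex inj_on_def)
  have "(\<Sum>c\<in>choices (fs, s) 0. t ^ (e + eld_gain s c)) =
      (\<Sum>c\<in>Ins_leaf ` {..length cs}. t ^ (e + eld_gain s c)) +
      (\<Sum>c\<in>(\<lambda>j. Ins_split j False) ` ?I. t ^ (e + eld_gain s c))"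
    unfolding s choices_0_eq by (rule sum.union_disjoint) auto
  then show ?thesis
    using leaf split s by (simp add: card_improper_at algebra_simps)
qed

lemma sum_choices_1:
  fixes t :: real
  shows "(\<Sum>c\<in>choices (fs, s) 1. t ^ (e + eld_gain s c)) =
    t ^ e * ((if 2 \<le> length fs then 1 else 0) + count_improper (root s) (map beta (children s)))"
proof -
  obtain v cs where s: "s = Node v cs" by (cases s)
  let ?I = "{j. j < length cs \<and> improper_at v cs j}"
  have split: "(\<Sum>c\<in>(\<lambda>j. Ins_split j True) ` ?I. t ^ (e + eld_gain s c)) = card ?I * t ^ e"
    by (simp add: sum.reindex inj_on_def)
  have "(\<Sum>c\<in>choices (fs, s) 1. t ^ (e + eld_gain s c)) =
      (\<Sum>c\<in>(if 2 \<le> length fs then {Ins_parent} else {}). t ^ (e + eld_gain s c)) +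
      (\<Sum>c\<in>(\<lambda>j. Ins_split j True) ` ?I. t ^ (e + eld_gain s c))"
    unfolding s choices_1_eq by (rule sum.union_disjoint) auto
  then show ?thesis
    using split s by (simp add: card_improper_at algebra_simps)
qed

lemma finite_vertex_occs: "finite (vertex_occs F)"
  unfolding vertex_occs_def using finite_occurrences by simp

lemma sum_vertex_occs:
  "(\<Sum>x\<in>vertex_occs F. g x) = (\<Sum>x\<in>occurrences (Node 0 F). if fst x = [] then 0 else g x)"
  unfolding vertex_occs_def
  by (simp add: sum.inter_filter[OF finite_occurrences]) (intro sum.cong refl; simp)

lemma sum_vertex_occs_snd:
  "(\<Sum>x\<in>vertex_occs F. g (snd x)) + g (Node 0 F) = sum_subtrees g (Node 0 F)"
  unfolding sum_vertex_occs using sum_proper_occurrences_snd[where t = "Node 0 F" and g = g] by simp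

lemma length_labels_forest: "F \<in> forests n k r \<Longrightarrow> length (concat (map labels F)) = n"
  using distinct_card[of "concat (map labels F)"] by (simp add: forests_def)

lemma card_vertex_occs: "F \<in> forests n k r \<Longrightarrow> card (vertex_occs F) = n"
  using sum_vertex_occs_snd[of "\<lambda>_. 1::nat" F] sum_subtrees_one[of "Node 0 F"]
    length_labels_forest[of F n k r] by (simp add: length_concat)

lemma sum_vertex_occs_children:
  "F \<in> forests n k r \<Longrightarrow> (\<Sum>x\<in>vertex_occs F. length (children (snd x))) = n - r"
  using sum_vertex_occs_snd[of "\<lambda>s. length (children s)" F] sum_subtrees_children[of "Node 0 F"]
    length_labels_forest[of F n k r] by (simp add: length_concat forests_def)

lemma sum_vertex_occs_improper:
  "F \<in> forests n k r \<Longrightarrow>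
    (\<Sum>x\<in>vertex_occs F. count_improper (root (snd x)) (map beta (children (snd x)))) = k"
  using sum_vertex_occs_snd[of "\<lambda>s. count_improper (root s) (map beta (children s))" F]
    sum_subtrees_improper[of "Node 0 F"] by (simp add: improper_count_def forests_def)

lemma count_nonroot_vertex_occs:
  assumes F: "F \<in> forests n k r"
  shows "(\<Sum>x\<in>vertex_occs F. if 2 \<le> length (fst x) then 1 else 0) = n - r"
proof -
  define A where "A i = (\<Sum>x\<in>occurrences (F ! i). if fst x = [] then 0 else 1::nat)" for i
  have deep: "(\<Sum>x\<in>vertex_occs F. if 2 \<le> length (fst x) then 1 else 0) = (\<Sum>i<length F. A i)"
    unfolding sum_vertex_occs sum_occurrences_Node A_def
    by (simp add: occ_in_child_def Suc_le_eq) (auto intro!: sum.cong)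
  have "A i + 1 = length (labels (F ! i))" for i
    unfolding A_def using sum_proper_occurrences_snd[where t = "F ! i" and g = "\<lambda>_. 1::nat"]
    sum_subtrees_one by simp
  then have "length (concat (map labels F)) = (\<Sum>i<length F. A i + 1)"
    by (simp add: length_concat sum_list_map_eq_sum_nth)
  also have "\<dots> = (\<Sum>i<length F. A i) + length F"
    by (simp only: sum.distrib) simp
  finally show ?thesis
    using deep length_labels_forest[OF F] F by (simp add: forests_def)
qed

lemma finite_trees_bounded:
  "finite A \<Longrightarrow> finite {t. set (labels t) \<subseteq> A \<and> length (labels t) \<le> m}"
proof (induction m)
  case (Suc m)
  let ?T = "{t. set (labels t) \<subseteq> A \<and> length (labels t) \<le> m}"
  have "{t. set (labels t) \<subseteq> A \<and> length (labels t) \<le> Suc m} \<subseteq>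
      (\<lambda>(v, cs). Node v cs) ` (A \<times> {cs. set cs \<subseteq> ?T \<and> length cs \<le> m})"
  proof
    fix t assume t: "t \<in> {t. set (labels t) \<subseteq> A \<and> length (labels t) \<le> Suc m}"
    obtain v cs where tv: "t = Node v cs" by (cases t)
    have s: "sum_list (map (\<lambda>c. length (labels c)) cs) \<le> m"
      using t unfolding tv by (simp add: length_concat o_def)
    have "length cs \<le> sum_list (map (\<lambda>c. length (labels c)) cs)"
      using sum_list_mono[of cs "\<lambda>_. 1::nat" "\<lambda>c. length (labels c)"]
      by (simp add: sum_list_triv Suc_le_eq)
    moreover have "length (labels c) \<le> sum_list (map (\<lambda>c. length (labels c)) cs)" if "c \<in> set cs" for c
      using that by (intro member_le_sum_list) auto
    ultimately show "t \<in> (\<lambda>(v, cs). Node v cs) ` (A \<times> {cs. set cs \<subseteq> ?T \<and> length cs \<le> m})"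
      using t s tv by force
  qed
  moreover have "finite (A \<times> {cs. set cs \<subseteq> ?T \<and> length cs \<le> m})"
    using Suc by (intro finite_SigmaI finite_lists_length_le) simp_all
  ultimately show ?case
    by (meson finite_imageI finite_subset)
qed simp

lemma finite_forests: "finite (forests n k r)"
proof -
  let ?T = "{t. set (labels t) \<subseteq> {1..n} \<and> length (labels t) \<le> n}"
  have "length (labels t) \<le> n" "set (labels t) \<subseteq> {1..n}" if "F \<in> forests n k r" "t \<in> set F" for F t
    using that length_labels_forest[of F n k r] member_le_sum_list[of "length (labels t)" "map length (map labels F)"]
    by (auto simp: forests_def length_concat)
  then have "forests n k r \<subseteq> {F. set F \<subseteq> ?T \<and> length F = r}"
    by (auto simp: forests_def)
  moreover have "finite {F. set F \<subseteq> ?T \<and> length F = r}"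
    by (intro finite_lists_length_eq finite_trees_bounded) simp
  ultimately show ?thesis
    by (rule finite_subset)
qed

definition forest_gf :: "nat \<Rightarrow> nat \<Rightarrow> nat \<Rightarrow> real \<Rightarrow> real" where
  "forest_gf n k r t = (\<Sum>F\<in>forests n k r. t ^ eld F)"

lemma sum_insertions_0:
  fixes t :: real
  assumes "F \<in> forests n k r"
  shows "(\<Sum>x\<in>vertex_occs F. \<Sum>c\<in>choices x 0. t ^ (eld F + eld_gain (snd x) c)) =
    t ^ eld F * (real n + t * real (n - r) + t * real k)"
proof -
  have "(\<Sum>x\<in>vertex_occs F. \<Sum>c\<in>choices x 0. t ^ (eld F + eld_gain (snd x) c)) =
      (\<Sum>x\<in>vertex_occs F. t ^ eld F * (1 + t * length (children (snd x)) +
        t * count_improper (root (snd x)) (map beta (children (snd x)))))"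
    using sum_choices_0 by (metis prod.collapse)
  also have "\<dots> = t ^ eld F * (real (card (vertex_occs F)) +
      t * real (\<Sum>x\<in>vertex_occs F. length (children (snd x))) +
      t * real (\<Sum>x\<in>vertex_occs F. count_improper (root (snd x)) (map beta (children (snd x)))))"
    by (simp add: sum_distrib_left sum.distrib algebra_simps)
  also have "\<dots> = t ^ eld F * (real n + t * real (n - r) + t * real k)"
    using card_vertex_occs[OF assms] sum_vertex_occs_children[OF assms]
      sum_vertex_occs_improper[OF assms] by (simp only:)
  finally show ?thesis .
qed

lemma sum_insertions_1:
  fixes t :: real
  assumes "F \<in> forests n k r"
  shows "(\<Sum>x\<in>vertex_occs F. \<Sum>c\<in>choices x 1. t ^ (eld F + eld_gain (snd x) c)) =
    t ^ eld F * (real (n - r) + real k)"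
proof -
  have "(\<Sum>x\<in>vertex_occs F. \<Sum>c\<in>choices x 1. t ^ (eld F + eld_gain (snd x) c)) =
      (\<Sum>x\<in>vertex_occs F. t ^ eld F * ((if 2 \<le> length (fst x) then 1 else 0) +
        count_improper (root (snd x)) (map beta (children (snd x)))))"
    using sum_choices_1 by (metis prod.collapse)
  also have "\<dots> = t ^ eld F * (real (\<Sum>x\<in>vertex_occs F. if 2 \<le> length (fst x) then 1 else 0) +
      real (\<Sum>x\<in>vertex_occs F. count_improper (root (snd x)) (map beta (children (snd x)))))"
    by (simp only: sum_distrib_left[symmetric] sum.distrib of_nat_sum of_nat_add)
  also have "\<dots> = t ^ eld F * (real (n - r) + real k)"
    using count_nonroot_vertex_occs[OF assms] sum_vertex_occs_improper[OF assms] by (simp only:)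
  finally show ?thesis .
qed

lemma sum_Sigma_pair:
  "finite A \<Longrightarrow> \<forall>x\<in>A. finite (B x) \<Longrightarrow> sum f (Sigma A B) = (\<Sum>x\<in>A. \<Sum>y\<in>B x. f (x, y))"
  using sum.Sigma[of A B "\<lambda>x y. f (x, y)"] by simp

lemma forest_gf_Suc:
  fixes t :: real
  assumes "r \<le> n"
  shows "forest_gf (Suc n) k r t = (real n + t * real (n - r) + t * real k) * forest_gf n k r t +
     (if k = 0 then 0 else (real (n - r) + real (k - 1)) * forest_gf n (k - 1) r t)"
proof -
  let ?w = "\<lambda>y. t ^ (eld (fst y) + eld_gain (snd (fst (snd y))) (snd (snd y)))"
  let ?A = "\<lambda>k g. SIGMA F:forests n k r. SIGMA x:vertex_occs F. choices x g"
  have parts: "(\<Sum>y\<in>?A k' g. ?w y) =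
      (\<Sum>F\<in>forests n k' r. \<Sum>x\<in>vertex_occs F. \<Sum>c\<in>choices x g. t ^ (eld F + eld_gain (snd x) c))"
    for k' g
    by (simp add: sum_Sigma_pair finite_forests finite_vertex_occs finite_choices finite_SigmaI)
  have "forest_gf (Suc n) k r t = (\<Sum>y\<in>insertions n k r. t ^ eld (insert_max (Suc n) y))"
    unfolding forest_gf_def by (rule sum.reindex_bij_betw[OF bij_betw_insert_max[OF assms], symmetric])
  also have "\<dots> = (\<Sum>y\<in>insertions n k r. ?w y)"
    using insert_max_props(2) by (intro sum.cong refl) (metis prod.collapse)
  also have "\<dots> = (\<Sum>y\<in>?A k 0. ?w y) + (if k = 0 then 0 else \<Sum>y\<in>?A (k - 1) 1. ?w y)"
  proof -
    have "?A k 0 \<inter> ?A (k - 1) 1 = {}"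
      by (auto simp: choices_def)
    then show ?thesis
      unfolding insertions_def
      by (simp add: sum.union_disjoint finite_forests finite_vertex_occs finite_choices finite_SigmaI)
  qed
  also have "(\<Sum>y\<in>?A k 0. ?w y) = (\<Sum>F\<in>forests n k r. t ^ eld F * (real n + t * real (n - r) + t * real k))"
    unfolding parts by (rule sum.cong[OF refl]) (rule sum_insertions_0)
  also have "(\<Sum>y\<in>?A (k - 1) 1. ?w y) = (\<Sum>F\<in>forests n (k - 1) r. t ^ eld F * (real (n - r) + real (k - 1)))"
    unfolding parts by (rule sum.cong[OF refl]) (rule sum_insertions_1)
  finally show ?thesis
    unfolding forest_gf_def by (simp add: sum_distrib_right[symmetric] mult.commute)
qed

section \<open>The polynomials and the initial forests\<close>

lemma coeff_Euler_operator:
  fixes p :: "real poly"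
  shows "coeff (smult a p + [:0, 1:] * pderiv p) k = (a + real k) * coeff p k"
  by (cases k) (simp_all add: coeff_pderiv algebra_simps)

lemma Qmk_Suc_Suc:
  "Qmk (Suc (Suc m)) k x t = (x + real (Suc m) + t * (real (Suc m) + real k)) * Qmk (Suc m) k x t +
    (if k = 0 then 0 else (real (Suc m) + real (k - 1)) * Qmk (Suc m) (k - 1) x t)"
proof -
  define p where "p = Qp (Suc m) x 1 t"
  define q where "q = smult (real (Suc m)) p + [:0, 1:] * pderiv p"
  have q: "coeff q j = (real (Suc m) + real j) * coeff p j" for j
    unfolding q_def by (rule coeff_Euler_operator)
  have "Qp (Suc (Suc m)) x 1 t = smult (x + real (Suc m)) p + (smult t q + pCons 0 q)"
    unfolding p_def q_def by (simp add: Let_def)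
  then have "Qmk (Suc (Suc m)) k x t = (x + real (Suc m)) * coeff p k + t * coeff q k + coeff (pCons 0 q) k"
    unfolding Qmk_def by simp
  also have "\<dots> = (x + real (Suc m) + t * (real (Suc m) + real k)) * coeff p k +
      (if k = 0 then 0 else (real (Suc m) + real (k - 1)) * coeff p (k - 1))"
    by (cases k) (simp_all add: q algebra_simps)
  finally show ?thesis
    unfolding Qmk_def p_def .
qed

lemma Qmk_1: "Qmk (Suc 0) k x t = (if k = 0 then 1 else 0)"
  by (simp add: Qmk_def coeff_1)

definition trivial_forest :: "nat \<Rightarrow> ptree list" where
  "trivial_forest r = map (\<lambda>i. Node (Suc i) []) [0..<r]"

lemma trivial_forest_in_forests: "trivial_forest r \<in> forests r 0 r"
proof -
  have "concat (map labels (trivial_forest r)) = [1..<Suc r]"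
    unfolding trivial_forest_def by (induction r) auto
  moreover have "improper_count (trivial_forest r) = 0"
    unfolding trivial_forest_def improper_count_def by (induction r) auto
  moreover have "length (trivial_forest r) = r" "\<forall>i<r. root (trivial_forest r ! i) = i + 1"
    by (simp_all add: trivial_forest_def)
  moreover have "distinct [1..<Suc r]" "set [1..<Suc r] = {1..r}"
    by auto
  ultimately show ?thesis
    unfolding forests_def mem_Collect_eq by (metis (no_types))
qed

lemma forests_of_roots_only: "F \<in> forests r k r \<Longrightarrow> F = trivial_forest r"
proof (rule nth_equalityI)
  assume F: "F \<in> forests r k r"
  then show "length F = length (trivial_forest r)"
    by (simp add: forests_def trivial_forest_def)
  fix i assume "i < length F"
  then have i: "i < r"
    using F by (simp add: forests_def)
  obtain v cs where Fi: "F ! i = Node v cs"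
    by (cases "F ! i")
  have v: "v = i + 1"
    using F i Fi by (auto simp: forests_def)
  have "cs = []"
  proof (rule ccontr)
    assume "cs \<noteq> []"
    then obtain c where c: "c \<in> set cs"
      using last_in_set by blast
    have "distinct (labels (F ! i))"
      using F i by (auto simp: forests_def distinct_concat_iff)
    then have "root c \<noteq> i + 1"
      using c Fi v root_in_labels[of c] by auto
    moreover have "root c \<in> set (labels (F ! i))"
      using c Fi root_in_labels[of c] by auto
    ultimately have "r < root c"
      using nonroot_label_gt[OF F i] by blast
    have "root c \<in> set (concat (map labels F))"
      using \<open>root c \<in> set (labels (F ! i))\<close> i F by (auto simp: forests_def)
    moreover have "set (concat (map labels F)) = {1..r}"
      using F by (simp only: forests_def mem_Collect_eq)
    ultimately have "root c \<le> r"
      by (metis atLeastAtMost_iff)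
    then show False
      using \<open>r < root c\<close> by simp
  qed
  then show "F ! i = trivial_forest r ! i"
    using Fi v i by (simp add: trivial_forest_def)
qed

lemma forest_gf_base: "forest_gf r k r t = (if k = 0 then 1 else 0)"
proof -
  have "k = 0" if "F \<in> forests r k r" for F
    using that forests_of_roots_only[OF that] trivial_forest_in_forests by (simp add: forests_def)
  then have "forests r k r = (if k = 0 then {trivial_forest r} else {})"
    using forests_of_roots_only trivial_forest_in_forests by auto
  moreover have "eld (trivial_forest r) = 0"
    unfolding trivial_forest_def eld_def by (induction r) auto
  ultimately show ?thesis
    unfolding forest_gf_def by simp
qed

lemma forest_gf_eq_Qmk: "forest_gf (r + Suc m) k r t = real r * Qmk (Suc m) k (real r) t"
proof (induction m arbitrary: k)
  case 0
  show ?case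
    using forest_gf_Suc[of r r k t] by (simp add: forest_gf_base Qmk_1)
next
  case (Suc m)
  have "forest_gf (r + Suc (Suc m)) k r t =
      (real (r + Suc m) + t * real (Suc m) + t * real k) * forest_gf (r + Suc m) k r t +
      (if k = 0 then 0 else (real (Suc m) + real (k - 1)) * forest_gf (r + Suc m) (k - 1) r t)"
    using forest_gf_Suc[of r "r + Suc m" k t] by simp
  also have "\<dots> = real r * Qmk (Suc (Suc m)) k (real r) t"
    unfolding Suc.IH Qmk_Suc_Suc by (simp add: algebra_simps)
  finally show ?case .
qed

theorem theorem5p1:
  fixes r n k :: nat and t :: real
  assumes "r \<ge> 1" and "n \<ge> r + 1"
  shows "real r * Qmk (n - r) k (real r) t = (\<Sum>F\<in>forests n k r. t ^ eld F)"
proof -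
  obtain m where "n = r + Suc m"
    using assms(2) by (metis add_Suc_right le_iff_add plus_1_eq_Suc add.commute)
  then show ?thesis
    using forest_gf_eq_Qmk[of r m k t] unfolding forest_gf_def by simp
qed

end
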